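(* Let $m,n\in\mathbb{N}$, $s_1,\dots,s_n\in\mathbb{C}$ (nonzero in the discrete case), $\boldsymbol{u}_j,\boldsymbol{v}_j\in\mathbb{C}^m$, and define $k_{jl}=\boldsymbol{v}_j^\intercal\boldsymbol{u}_l/(s_j+s_l^* )$ in the continuous case (assuming $s_j+s_l^*\neq0$) and $k_{jl}=\boldsymbol{v}_j^\intercal\boldsymbol{u}_l/(1-s_js_l^* )$ in the discrete case (assuming $s_js_l^*\neq1$); set $\eta=0$ (continuous) or $\eta=1$ (discrete). Fix $i\in\{1,\dots,n\}$ with $k_{ii}\neq0$ and suppose $K_1=(k_{jl})_{j,l=1}^{i-1}$ is invertible. Define $$\boldsymbol{u}_i^{(-)}=\boldsymbol{u}_i-\sum_{j,k=1}^{i-1}\boldsymbol{u}_j(K_1^{-1})_{jk}k_{ki},\qquad \boldsymbol{v}_i^{(-)}=s_i^{\eta}\Big(s_i^{-\eta}\boldsymbol{v}_i-\sum_{j,k=1}^{i-1}k_{ij}(K_1^{-1})_{jk}s_k^{-\eta}\boldsymbol{v}_k\Big),$$ $$\gamma_i^{(-)}=\frac{1}{k_{ii}}\Big(k_{ii}-\sum_{j,k=1}^{i-1}k_{ij}(K_1^{-1})_{jk}k_{ki}\Big).$$ Then $\boldsymbol{v}_i^{(-)\intercal}\boldsymbol{u}_i^{(-)}=\gamma_i^{(-)}\,\boldsymbol{v}_i^\intercal\boldsymbol{u}_i$.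
   Context: ${}^*$ denotes complex conjugation and ${}^\intercal$ transposition. For $i=1$ the sums are empty. *)

theory Defs
  imports Complex_Main "Jordan_Normal_Form.Gauss_Jordan_Elimination"
begin

text \<open>Vectors in C^m are represented as functions nat => complex, components 0..m-1.
  bil m v w is the bilinear (unconjugated) product v^T w.\<close>
definition bil :: "nat \<Rightarrow> (nat \<Rightarrow> complex) \<Rightarrow> (nat \<Rightarrow> complex) \<Rightarrow> complex" where
  "bil m v w = (\<Sum>c<m. v c * w c)"

definition kcoef :: "bool \<Rightarrow> nat \<Rightarrow> (nat \<Rightarrow> complex) \<Rightarrow> (nat \<Rightarrow> nat \<Rightarrow> complex)
    \<Rightarrow> (nat \<Rightarrow> nat \<Rightarrow> complex) \<Rightarrow> nat \<Rightarrow> nat \<Rightarrow> complex" where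
  "kcoef disc m s u v j l = bil m (v j) (u l) /
     (if disc then 1 - s j * cnj (s l) else s j + cnj (s l))"

definition mat_inv :: "complex mat \<Rightarrow> complex mat" where
  "mat_inv A = the (mat_inverse A)"

end

theory Submission imports Defs begin

(* Write D(a,b) for the denominator of k_ab, so that v_a^T u_b = D(a,b) k_ab.
   In both cases D has displacement structure: D(a,b) = s_a^eta (x_a + y_b) with
   x_a = 1/s_a (resp. s_a), y_b = -cnj s_b (resp. cnj s_b).  Hence the rescaled vectors
   V_a = s_a^{-eta} v_a satisfy  V_a^T u_b = (x_a + y_b) k_ab.
   For any Gram-type family with this property, subtracting from V_i and u_i the
   combinations given by the row k_i. K1^{-1} and the column K1^{-1} k_.i, the bilinear
   product collapses to (x_i + y_i) times the Schur complement k_ii - k_i. K1^{-1} k_.i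
   (all cross terms cancel because K1^{-1} inverts K1 on both sides).  Multiplying back
   by s_i^eta turns (x_i + y_i) into D(i,i) = v_i^T u_i / k_ii, which is the claim. *)

lemma bil_diff_left: "bil m (\<lambda>c. f c - g c) w = bil m f w - bil m g w"
  unfolding bil_def by (simp add: algebra_simps sum_subtractf)

lemma bil_diff_right: "bil m w (\<lambda>c. f c - g c) = bil m w f - bil m w g"
  unfolding bil_def by (simp add: algebra_simps sum_subtractf)

lemma bil_scale_left: "bil m (\<lambda>c. a * f c) w = a * bil m f w"
  unfolding bil_def by (simp add: sum_distrib_left mult.assoc)

lemma bil_sum_left: "bil m (\<lambda>c. \<Sum>q\<in>I. a q * V q c) w = (\<Sum>q\<in>I. a q * bil m (V q) w)"
  unfolding bil_def by (simp add: sum_distrib_left sum_distrib_right mult.assoc sum.swap[of _ I])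

lemma bil_sum_right: "bil m w (\<lambda>c. \<Sum>q\<in>I. a q * V q c) = (\<Sum>q\<in>I. a q * bil m w (V q))"
  unfolding bil_def
  by (simp add: sum_distrib_left mult.left_commute sum.swap[of _ I])

lemma mat_inv_two_sided:
  fixes A :: "complex mat"
  assumes A: "A \<in> carrier_mat n n" and inv: "invertible_mat A"
  shows "A * mat_inv A = 1\<^sub>m n" "mat_inv A * A = 1\<^sub>m n" "mat_inv A \<in> carrier_mat n n"
proof -
  from inv obtain B where AB: "A * B = 1\<^sub>m (dim_row A)" and BA: "B * A = 1\<^sub>m (dim_row B)"
    unfolding invertible_mat_def inverts_mat_def by auto
  have "dim_col B = n" "dim_row B = n"
    using AB BA A by (metis index_mult_mat(3) index_one_mat(3) carrier_matD(1,2))+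
  then have "A \<in> Units (ring_mat TYPE(complex) n ())"
    unfolding Units_def ring_mat_simps using A AB BA by auto
  then obtain C where "mat_inverse A = Some C"
    using mat_inverse(1)[OF A, of "()"] by fastforce
  then show "A * mat_inv A = 1\<^sub>m n" "mat_inv A * A = 1\<^sub>m n" "mat_inv A \<in> carrier_mat n n"
    using mat_inverse(2)[OF A] unfolding mat_inv_def by auto
qed

lemma mat_inv_kernel_delta:
  fixes k :: "nat \<Rightarrow> nat \<Rightarrow> complex" and N :: nat
  defines "K \<equiv> mat N N (\<lambda>(j, l). k (Suc j) (Suc l))"
  assumes inv: "invertible_mat K" and j: "j \<in> {1..N}" and l: "l \<in> {1..N}"
  shows "(\<Sum>q=1..N. mat_inv K $$ (j - 1, q - 1) * k q l) = (if j = l then 1 else 0)"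
    and "(\<Sum>q=1..N. k j q * mat_inv K $$ (q - 1, l - 1)) = (if j = l then 1 else 0)"
proof -
  have Kc: "K \<in> carrier_mat N N" unfolding K_def by simp
  note Kinv = mat_inv_two_sided[OF Kc inv]
  have jl: "j - 1 < N" "l - 1 < N" "(j - 1 = l - 1) = (j = l)" using j l by auto
  have shift: "(\<Sum>q=1..N. f q) = (\<Sum>t<N. f (Suc t))" for f :: "nat \<Rightarrow> complex"
    by (simp add: sum.atLeast1_atMost_eq)
  have "(mat_inv K * K) $$ (j - 1, l - 1) = (\<Sum>t<N. mat_inv K $$ (j - 1, t) * k (Suc t) l)"
    using Kinv(3) jl j l by (auto simp: K_def scalar_prod_def lessThan_atLeast0 intro!: sum.cong)
  then show "(\<Sum>q=1..N. mat_inv K $$ (j - 1, q - 1) * k q l) = (if j = l then 1 else 0)"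
    unfolding shift using Kinv(2) jl by simp
  have "(K * mat_inv K) $$ (j - 1, l - 1) = (\<Sum>t<N. k j (Suc t) * mat_inv K $$ (t, l - 1))"
    using Kinv(3) jl j l by (auto simp: K_def scalar_prod_def lessThan_atLeast0 intro!: sum.cong)
  then show "(\<Sum>q=1..N. k j q * mat_inv K $$ (q - 1, l - 1)) = (if j = l then 1 else 0)"
    unfolding shift using Kinv(1) jl by simp
qed

lemma left_inverse_solves:
  fixes k Ki :: "'b \<Rightarrow> 'b \<Rightarrow> 'a::comm_ring_1"
  assumes fin: "finite I" and l: "l \<in> I"
    and delta: "\<And>j. j \<in> I \<Longrightarrow> (\<Sum>q\<in>I. Ki j q * k q l) = (if j = l then 1 else 0)"
  shows "(\<Sum>q\<in>I. (\<Sum>j\<in>I. r j * Ki j q) * k q l) = r l"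
proof -
  have "(\<Sum>q\<in>I. (\<Sum>j\<in>I. r j * Ki j q) * k q l) = (\<Sum>q\<in>I. \<Sum>j\<in>I. r j * (Ki j q * k q l))"
    by (simp add: sum_distrib_right mult.assoc)
  also have "\<dots> = (\<Sum>j\<in>I. r j * (\<Sum>q\<in>I. Ki j q * k q l))"
    by (subst sum.swap) (simp add: sum_distrib_left)
  also have "\<dots> = (\<Sum>j\<in>I. r j * (if j = l then 1 else 0))"
    by (rule sum.cong) (simp_all add: delta)
  also have "\<dots> = r l"
    using fin l by (simp add: if_distrib[where f = "times _"] cong: if_cong)
  finally show ?thesis .
qed

lemma right_inverse_solves:
  fixes k Ki :: "'b \<Rightarrow> 'b \<Rightarrow> 'a::comm_ring_1"
  assumes fin: "finite I" and l: "l \<in> I"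
    and delta: "\<And>q. q \<in> I \<Longrightarrow> (\<Sum>j\<in>I. k l j * Ki j q) = (if l = q then 1 else 0)"
  shows "(\<Sum>j\<in>I. k l j * (\<Sum>q\<in>I. Ki j q * c q)) = c l"
proof -
  have "(\<Sum>j\<in>I. k l j * (\<Sum>q\<in>I. Ki j q * c q)) = (\<Sum>j\<in>I. \<Sum>q\<in>I. k l j * Ki j q * c q)"
    by (simp add: sum_distrib_left mult.assoc)
  also have "\<dots> = (\<Sum>q\<in>I. (\<Sum>j\<in>I. k l j * Ki j q) * c q)"
    by (subst sum.swap) (simp add: sum_distrib_right)
  also have "\<dots> = (\<Sum>q\<in>I. (if l = q then 1 else 0) * c q)"
    by (rule sum.cong) (simp_all add: delta)
  also have "\<dots> = c l"
    using fin l by (simp add: if_distrib[where f = "\<lambda>t. t * _"] cong: if_cong)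
  finally show ?thesis .
qed

lemma schur_gram_reduction:
  fixes V U k :: "nat \<Rightarrow> nat \<Rightarrow> complex" and x y \<alpha> \<beta> :: "nat \<Rightarrow> complex"
  assumes gram: "\<And>a b. a \<in> insert i I \<Longrightarrow> b \<in> insert i I \<Longrightarrow> bil m (V a) (U b) = (x a + y b) * k a b"
    and row: "\<And>l. l \<in> I \<Longrightarrow> (\<Sum>q\<in>I. \<alpha> q * k q l) = k i l"
    and col: "\<And>l. l \<in> I \<Longrightarrow> (\<Sum>j\<in>I. k l j * \<beta> j) = k l i"
    and common: "(\<Sum>q\<in>I. \<alpha> q * k q i) = (\<Sum>j\<in>I. k i j * \<beta> j)"
  shows "bil m (\<lambda>c. V i c - (\<Sum>q\<in>I. \<alpha> q * V q c)) (\<lambda>c. U i c - (\<Sum>j\<in>I. \<beta> j * U j c))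
     = (x i + y i) * (k i i - (\<Sum>j\<in>I. k i j * \<beta> j))"
proof -
  define S where "S = (\<Sum>j\<in>I. k i j * \<beta> j)"
  define A where "A = (\<Sum>q\<in>I. \<alpha> q * x q * k q i)"
  define B where "B = (\<Sum>j\<in>I. \<beta> j * y j * k i j)"
  have ii: "bil m (V i) (U i) = (x i + y i) * k i i" using gram by auto
  have iI: "(\<Sum>j\<in>I. \<beta> j * bil m (V i) (U j)) = x i * S + B"
    unfolding S_def B_def
    by (simp add: gram algebra_simps sum.distrib sum_distrib_left cong: sum.cong)
  have Ii: "(\<Sum>q\<in>I. \<alpha> q * bil m (V q) (U i)) = A + y i * S"
    unfolding S_def A_def common[symmetric]
    by (simp add: gram algebra_simps sum.distrib sum_distrib_left cong: sum.cong)
  text \<open>In the doubly reduced term the row and column systems remove all coupling.\<close>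
  have II: "(\<Sum>q\<in>I. \<alpha> q * (\<Sum>j\<in>I. \<beta> j * bil m (V q) (U j))) = A + B"
  proof -
    have "(\<Sum>q\<in>I. \<alpha> q * (\<Sum>j\<in>I. \<beta> j * bil m (V q) (U j)))
       = (\<Sum>q\<in>I. \<Sum>j\<in>I. \<alpha> q * x q * (k q j * \<beta> j) + \<beta> j * y j * (\<alpha> q * k q j))"
      by (simp add: gram sum_distrib_left algebra_simps cong: sum.cong)
    also have "\<dots> = (\<Sum>q\<in>I. \<alpha> q * x q * (\<Sum>j\<in>I. k q j * \<beta> j))
                  + (\<Sum>j\<in>I. \<beta> j * y j * (\<Sum>q\<in>I. \<alpha> q * k q j))"
      by (simp add: sum.distrib sum_distrib_left
          sum.swap[where A = I and B = I and g = "\<lambda>q j. \<beta> j * y j * (\<alpha> q * k q j)"])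
    also have "\<dots> = A + B" unfolding A_def B_def by (simp add: row col)
    finally show ?thesis .
  qed
  have "bil m (\<lambda>c. V i c - (\<Sum>q\<in>I. \<alpha> q * V q c)) (\<lambda>c. U i c - (\<Sum>j\<in>I. \<beta> j * U j c))
      = bil m (V i) (U i) - (\<Sum>j\<in>I. \<beta> j * bil m (V i) (U j)) - (\<Sum>q\<in>I. \<alpha> q * bil m (V q) (U i))
        + (\<Sum>q\<in>I. \<alpha> q * (\<Sum>j\<in>I. \<beta> j * bil m (V q) (U j)))"
    by (simp add: bil_diff_left bil_diff_right bil_sum_left bil_sum_right)
  also have "\<dots> = (x i + y i) * (k i i - S)" by (simp add: ii iI Ii II algebra_simps)
  finally show ?thesis by (simp add: S_def)
qed

text \<open>The reduction with alpha and beta produced by a two-sided inverse Ki of k on I,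
  stated with the double sums in which the theorem is phrased.\<close>
lemma schur_gram_reduction_inverse:
  fixes V U k Ki :: "nat \<Rightarrow> nat \<Rightarrow> complex" and x y :: "nat \<Rightarrow> complex"
  assumes fin: "finite I"
    and gram: "\<And>a b. a \<in> insert i I \<Longrightarrow> b \<in> insert i I \<Longrightarrow> bil m (V a) (U b) = (x a + y b) * k a b"
    and left_inv: "\<And>j l. j \<in> I \<Longrightarrow> l \<in> I \<Longrightarrow> (\<Sum>q\<in>I. Ki j q * k q l) = (if j = l then 1 else 0)"
    and right_inv: "\<And>j l. j \<in> I \<Longrightarrow> l \<in> I \<Longrightarrow> (\<Sum>q\<in>I. k j q * Ki q l) = (if j = l then 1 else 0)"
  shows "bil m (\<lambda>c. V i c - (\<Sum>j\<in>I. \<Sum>q\<in>I. k i j * Ki j q * V q c))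
               (\<lambda>c. U i c - (\<Sum>j\<in>I. \<Sum>q\<in>I. U j c * Ki j q * k q i))
     = (x i + y i) * (k i i - (\<Sum>j\<in>I. \<Sum>q\<in>I. k i j * Ki j q * k q i))"
proof -
  define \<alpha> where "\<alpha> q = (\<Sum>j\<in>I. k i j * Ki j q)" for q
  define \<beta> where "\<beta> j = (\<Sum>q\<in>I. Ki j q * k q i)" for j
  have row: "(\<Sum>q\<in>I. \<alpha> q * k q l) = k i l" if "l \<in> I" for l
    unfolding \<alpha>_def by (rule left_inverse_solves[OF fin that]) (simp add: left_inv that)
  have col: "(\<Sum>j\<in>I. k l j * \<beta> j) = k l i" if "l \<in> I" for l
    unfolding \<beta>_def by (rule right_inverse_solves[OF fin that]) (simp add: right_inv that)
  have common: "(\<Sum>q\<in>I. \<alpha> q * k q i) = (\<Sum>j\<in>I. k i j * \<beta> j)"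
    unfolding \<alpha>_def \<beta>_def sum_distrib_left sum_distrib_right
    by (subst sum.swap) (simp add: mult.assoc)
  have V_sum: "(\<Sum>j\<in>I. \<Sum>q\<in>I. k i j * Ki j q * V q c) = (\<Sum>q\<in>I. \<alpha> q * V q c)" for c
    unfolding \<alpha>_def sum_distrib_right by (rule sum.swap)
  have U_sum: "(\<Sum>j\<in>I. \<Sum>q\<in>I. U j c * Ki j q * k q i) = (\<Sum>j\<in>I. \<beta> j * U j c)" for c
    unfolding \<beta>_def by (simp add: sum_distrib_left sum_distrib_right mult_ac)
  have S_sum: "(\<Sum>j\<in>I. \<Sum>q\<in>I. k i j * Ki j q * k q i) = (\<Sum>j\<in>I. k i j * \<beta> j)"
    unfolding \<beta>_def by (simp add: sum_distrib_left mult.assoc)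
  show ?thesis
    unfolding V_sum U_sum S_sum by (rule schur_gram_reduction[OF gram row col common])
qed

definition kdenom :: "bool \<Rightarrow> (nat \<Rightarrow> complex) \<Rightarrow> nat \<Rightarrow> nat \<Rightarrow> complex" where
  "kdenom disc s j l = (if disc then 1 - s j * cnj (s l) else s j + cnj (s l))"

definition disp_left :: "bool \<Rightarrow> (nat \<Rightarrow> complex) \<Rightarrow> nat \<Rightarrow> complex" where
  "disp_left disc s j = (if disc then inverse (s j) else s j)"

definition disp_right :: "bool \<Rightarrow> (nat \<Rightarrow> complex) \<Rightarrow> nat \<Rightarrow> complex" where
  "disp_right disc s l = (if disc then - cnj (s l) else cnj (s l))"

text \<open>Displacement splitting D(j,l) = s_j^eta (x_j + y_l); in the discrete case it
  needs s_j \<noteq> 0 to write 1 - s_j cnj s_l = s_j (1/s_j - cnj s_l).\<close>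
lemma kdenom_displacement:
  assumes "disc \<Longrightarrow> s j \<noteq> 0"
  shows "kdenom disc s j l = s j powi (if disc then 1 else 0) * (disp_left disc s j + disp_right disc s l)"
  using assms by (cases disc) (auto simp: kdenom_def disp_left_def disp_right_def field_simps)

lemma rescaled_gram:
  fixes disc :: bool and eta :: int
  defines "eta \<equiv> (if disc then 1 else 0)"
  assumes s_nz: "disc \<Longrightarrow> s j \<noteq> 0" and D_nz: "kdenom disc s j l \<noteq> 0"
  shows "bil m (\<lambda>c. s j powi (- eta) * v j c) (u l)
       = (disp_left disc s j + disp_right disc s l) * kcoef disc m s u v j l"
proof -
  have cancel: "s j powi (- eta) * s j powi eta = 1"
    using s_nz by (cases disc) (simp_all add: eta_def)
  have "bil m (\<lambda>c. s j powi (- eta) * v j c) (u l) = s j powi (- eta) * bil m (v j) (u l)"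
    by (rule bil_scale_left)
  also have "\<dots> = s j powi (- eta) * kdenom disc s j l * kcoef disc m s u v j l"
    using D_nz by (simp add: kcoef_def kdenom_def)
  also have "\<dots> = (disp_left disc s j + disp_right disc s l) * kcoef disc m s u v j l"
    using cancel by (simp add: kdenom_displacement[of disc s j l, OF s_nz] eta_def[symmetric])
  finally show ?thesis .
qed

theorem proposition6p9:
  fixes disc :: bool and m n i :: nat and s :: "nat \<Rightarrow> complex"
    and u v :: "nat \<Rightarrow> nat \<Rightarrow> complex"
  defines "eta \<equiv> (if disc then 1 else 0 :: int)"
    and "kk \<equiv> kcoef disc m s u v"
    and "K1 \<equiv> mat (i - 1) (i - 1) (\<lambda>(j, l). kcoef disc m s u v (Suc j) (Suc l))"
  assumes s_nz: "disc \<Longrightarrow> \<forall>j\<in>{1..n}. s j \<noteq> 0"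
    and denom: "\<forall>j\<in>{1..n}. \<forall>l\<in>{1..n}.
        (if disc then s j * cnj (s l) \<noteq> 1 else s j + cnj (s l) \<noteq> 0)"
    and i_range: "i \<in> {1..n}"
    and kii: "kk i i \<noteq> 0"
    and K1_inv: "invertible_mat K1"
  shows "bil m
      (\<lambda>c. s i powi eta * (s i powi (- eta) * v i c
          - (\<Sum>j=1..i-1. \<Sum>q=1..i-1. kk i j * mat_inv K1 $$ (j - 1, q - 1) * s q powi (- eta) * v q c)))
      (\<lambda>c. u i c - (\<Sum>j=1..i-1. \<Sum>q=1..i-1. u j c * mat_inv K1 $$ (j - 1, q - 1) * kk q i))
    = (1 / kk i i) * (kk i i - (\<Sum>j=1..i-1. \<Sum>q=1..i-1. kk i j * mat_inv K1 $$ (j - 1, q - 1) * kk q i))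
      * bil m (v i) (u i)"
proof -
  define I where "I = {1..i-1}"
  define Ki where "Ki j q = mat_inv K1 $$ (j - 1, q - 1)" for j q
  define x where "x = disp_left disc s"
  define y where "y = disp_right disc s"
  have range: "a \<in> {1..n}" if "a \<in> insert i I" for a using that i_range by (auto simp: I_def)
  have D_nz: "kdenom disc s a b \<noteq> 0" if "a \<in> {1..n}" "b \<in> {1..n}" for a b
    using denom that by (auto simp: kdenom_def split: if_splits)
  have gram: "bil m (\<lambda>c. s a powi (- eta) * v a c) (u b) = (x a + y b) * kk a b"
    if "a \<in> insert i I" "b \<in> insert i I" for a b
    using rescaled_gram[OF _ D_nz] s_nz range[OF that(1)] range[OF that(2)]
    unfolding eta_def kk_def x_def y_def by blast
  have reduced: "bil m (\<lambda>c. s i powi (- eta) * v i c - (\<Sum>j\<in>I. \<Sum>q\<in>I. kk i j * Ki j q * (s q powi (- eta) * v q c)))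
       (\<lambda>c. u i c - (\<Sum>j\<in>I. \<Sum>q\<in>I. u j c * Ki j q * kk q i))
     = (x i + y i) * (kk i i - (\<Sum>j\<in>I. \<Sum>q\<in>I. kk i j * Ki j q * kk q i))"
    by (rule schur_gram_reduction_inverse[OF _ gram])
       (use mat_inv_kernel_delta[of "i - 1" kk] K1_inv in \<open>auto simp: I_def Ki_def K1_def kk_def\<close>)
  have Dii: "bil m (v i) (u i) = s i powi eta * (x i + y i) * kk i i"
    using D_nz[OF i_range i_range] s_nz i_range kdenom_displacement[of disc s i i]
    by (simp add: kk_def kcoef_def kdenom_def x_def y_def eta_def)
  have "bil m
      (\<lambda>c. s i powi eta * (s i powi (- eta) * v i c
          - (\<Sum>j=1..i-1. \<Sum>q=1..i-1. kk i j * mat_inv K1 $$ (j - 1, q - 1) * s q powi (- eta) * v q c)))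
      (\<lambda>c. u i c - (\<Sum>j=1..i-1. \<Sum>q=1..i-1. u j c * mat_inv K1 $$ (j - 1, q - 1) * kk q i))
    = s i powi eta * ((x i + y i) * (kk i i - (\<Sum>j\<in>I. \<Sum>q\<in>I. kk i j * Ki j q * kk q i)))"
    using reduced unfolding I_def Ki_def by (simp only: bil_scale_left mult.assoc)
  also have "\<dots> = (1 / kk i i) * (kk i i - (\<Sum>j\<in>I. \<Sum>q\<in>I. kk i j * Ki j q * kk q i)) * bil m (v i) (u i)"
    unfolding Dii using kii by (simp add: field_simps)
  finally show ?thesis by (simp only: I_def Ki_def)
qed

end
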